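(* Let $a<b$ be real, $y\in(a,b)$, and let $n\ge2$ be an integer. Then $$\left(\frac{(n-2)\log 2}{32\min\{y-a,b-y\}}\right)^{1/2} \le \sup_{0\ne f\in\mathcal{E}_n}\frac{|f(y)|}{\|f\|_{L_2[a,b]}} \le \left(\frac{2n}{\min\{y-a,b-y\}}\right)^{1/2}.$$
   Context: $\mathcal{E}_n$ denotes the set of all functions $f(t)=\sum_{j=1}^na_je^{\lambda_jt}$ ($t\in\mathbb{R}$) with $a_j,\lambda_j\in\mathbb{C}$. $\|f\|_{L_2[a,b]}=(\int_a^b|f(t)|^2dt)^{1/2}$. *)

theory Defs
  imports "HOL-Analysis.Analysis"
begin

definition exp_sums :: "nat \<Rightarrow> (real \<Rightarrow> complex) set" where
  "exp_sums n = {f. \<exists>c lam :: nat \<Rightarrow> complex.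
      f = (\<lambda>t. \<Sum>j\<in>{1..n}. c j * exp (lam j * complex_of_real t))}"

definition L2_norm_on :: "real \<Rightarrow> real \<Rightarrow> (real \<Rightarrow> complex) \<Rightarrow> real" where
  "L2_norm_on a b f = sqrt (integral {a..b} (\<lambda>t. (cmod (f t))^2))"

end

theory Submission
  imports Defs
begin

text \<open>Let \<open>\<delta>\<close> be the distance from \<open>y\<close> to the nearer endpoint of \<open>[a, b]\<close>.

  Upper bound: on an interval of length \<open>\<delta>\<close> the span of the \<open>n\<close> exponentials has an
  orthonormal basis \<open>e\<^sub>1, \<dots>, e\<^sub>d\<close> with \<open>d \<le> n\<close>. For \<open>g\<close> in the span, Cauchy--Schwarz gives
  \<open>|g u|\<^sup>2 \<le> \<parallel>g\<parallel>\<^sup>2 K u\<close> with \<open>K = \<Sum> |e\<^sub>i|\<^sup>2\<close>, and \<open>K\<close> integrates to \<open>d\<close>. Since exponential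
  sums are closed under translation, for every point \<open>u\<close> of the interval some translate of \<open>f\<close>
  takes the value \<open>f y\<close> at \<open>u\<close>; averaging the pointwise bound over \<open>u\<close> yields
  \<open>\<delta> |f y|\<^sup>2 \<le> n \<parallel>f\<parallel>\<^sup>2\<close>, the norm taken over \<open>[y - \<delta>, y + \<delta>]\<close>.

  Lower bound: \<open>\<Sum>\<^sub>k\<^sub>=\<^sub>1\<^sup>n exp ((- L + i \<pi> k / \<delta>) (t - y))\<close> equals \<open>n\<close> at \<open>y\<close>, and \<open>[a, b]\<close>
  lies to the right of \<open>y - \<delta>\<close> (or to the left of \<open>y + \<delta>\<close>, which the reflection
  \<open>t \<mapsto> - t\<close> reduces to the first case). On each period of length \<open>2 \<delta>\<close>
  the Dirichlet-kernel factor has squared integral \<open>2 \<delta> n\<close>, while for \<open>L = ln 2 / (4 \<delta>)\<close> the damping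
  halves from one period to the next, so \<open>\<parallel>f\<parallel>\<^sup>2 \<le> 8 \<delta> n\<close> on \<open>[a, b]\<close>.
  This gives the lower bound \<open>sqrt (n / (8 \<delta>))\<close>, which dominates the stated one.\<close>

section \<open>Orthonormal systems in \<open>L\<^sub>2[a,b]\<close>\<close>

definition L2_inner :: "real \<Rightarrow> real \<Rightarrow> (real \<Rightarrow> complex) \<Rightarrow> (real \<Rightarrow> complex) \<Rightarrow> complex" where
  "L2_inner a b g h = integral {a..b} (\<lambda>t. g t * cnj (h t))"

definition orthonormal_on :: "real \<Rightarrow> real \<Rightarrow> nat \<Rightarrow> (nat \<Rightarrow> real \<Rightarrow> complex) \<Rightarrow> bool" where
  "orthonormal_on a b d e \<longleftrightarrow> (\<forall>i<d. continuous_on {a..b} (e i)) \<and>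
     (\<forall>i<d. \<forall>j<d. L2_inner a b (e i) (e j) = (if i = j then 1 else 0))"

definition in_span_on :: "real \<Rightarrow> real \<Rightarrow> nat \<Rightarrow> (nat \<Rightarrow> real \<Rightarrow> complex) \<Rightarrow> (real \<Rightarrow> complex) \<Rightarrow> bool" where
  "in_span_on a b d e g \<longleftrightarrow> (\<exists>\<beta>. \<forall>t\<in>{a..b}. g t = (\<Sum>i<d. \<beta> i * e i t))"

lemma integral_cmod_sq_nonneg: "0 \<le> integral S (\<lambda>t. (cmod (f t))\<^sup>2)"
  by (cases "(\<lambda>t. (cmod (f t))\<^sup>2) integrable_on S") (simp_all add: integral_nonneg not_integrable_integral)

lemma integral_cmod_sq_eq_0D:
  fixes g :: "real \<Rightarrow> complex"
  assumes "a < b" "continuous_on {a..b} g" "integral {a..b} (\<lambda>t. (cmod (g t))\<^sup>2) = 0" "t \<in> {a..b}"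
  shows "g t = 0"
proof -
  have "continuous_on {a..b} (\<lambda>t. (cmod (g t))\<^sup>2)"
    by (intro continuous_intros assms(2))
  then have "\<forall>x\<in>{a..b}. (cmod (g x))\<^sup>2 = 0"
    using assms(1,3) integral_eq_0_iff[of a b "\<lambda>t. (cmod (g t))\<^sup>2"] by simp
  then show ?thesis using assms(4) by simp
qed

lemma L2_inner_cnj: "L2_inner a b h g = cnj (L2_inner a b g h)"
  unfolding L2_inner_def integral_cnj by (simp add: mult.commute)

lemma L2_inner_self:
  assumes "continuous_on {a..b} g"
  shows "L2_inner a b g g = of_real (integral {a..b} (\<lambda>t. (cmod (g t))\<^sup>2))"
proof -
  have "(\<lambda>t. (cmod (g t))\<^sup>2) integrable_on {a..b}"
    by (intro integrable_continuous_interval continuous_intros assms)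
  then show ?thesis
    unfolding L2_inner_def complex_norm_square[symmetric]
    using integral_unique[OF has_integral_of_real[OF integrable_integral]] by blast
qed

lemma L2_inner_cong_left:
  assumes "\<And>t. t \<in> {a..b} \<Longrightarrow> g t = g' t"
  shows "L2_inner a b g h = L2_inner a b g' h"
  unfolding L2_inner_def by (intro integral_cong) (simp add: assms)

lemma L2_inner_sum_left:
  assumes "finite I" "\<And>i. i \<in> I \<Longrightarrow> continuous_on {a..b} (g i)" "continuous_on {a..b} h"
  shows "L2_inner a b (\<lambda>t. \<Sum>i\<in>I. c i * g i t) h = (\<Sum>i\<in>I. c i * L2_inner a b (g i) h)"
proof -
  have "L2_inner a b (\<lambda>t. \<Sum>i\<in>I. c i * g i t) h
      = integral {a..b} (\<lambda>t. \<Sum>i\<in>I. c i * (g i t * cnj (h t)))"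
    unfolding L2_inner_def by (simp add: sum_distrib_right mult.assoc)
  also have "\<dots> = (\<Sum>i\<in>I. c i * L2_inner a b (g i) h)"
    using assms unfolding L2_inner_def
    by (subst integral_sum) (auto intro!: integrable_continuous_interval continuous_intros)
  finally show ?thesis .
qed

lemma L2_inner_diff_left:
  assumes "continuous_on {a..b} g" "continuous_on {a..b} g'" "continuous_on {a..b} h"
  shows "L2_inner a b (\<lambda>t. g t - g' t) h = L2_inner a b g h - L2_inner a b g' h"
  unfolding L2_inner_def using assms
  by (subst integral_diff[symmetric])
     (auto simp: algebra_simps intro!: integrable_continuous_interval continuous_intros)

lemma orthonormal_on_coefficients:
  assumes "orthonormal_on a b d e" "\<And>t. t \<in> {a..b} \<Longrightarrow> g t = (\<Sum>i<d. \<beta> i * e i t)" "j < d"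
  shows "L2_inner a b g (e j) = \<beta> j"
proof -
  have "L2_inner a b g (e j) = L2_inner a b (\<lambda>t. \<Sum>i<d. \<beta> i * e i t) (e j)"
    using assms(2) by (rule L2_inner_cong_left)
  also have "\<dots> = (\<Sum>i<d. \<beta> i * L2_inner a b (e i) (e j))"
    using assms(1,3) unfolding orthonormal_on_def by (intro L2_inner_sum_left) auto
  also have "\<dots> = (\<Sum>i<d. if i = j then \<beta> i else 0)"
    using assms(1,3) by (intro sum.cong refl) (auto simp: orthonormal_on_def)
  also have "\<dots> = \<beta> j"
    using assms(3) by simp
  finally show ?thesis .
qed

lemma in_span_on_extend:
  assumes "in_span_on a b d e g" "d \<le> d'" "\<forall>i<d. e' i = e i"
  shows "in_span_on a b d' e' g"
proof -
  obtain \<beta> where \<beta>: "\<forall>t\<in>{a..b}. g t = (\<Sum>i<d. \<beta> i * e i t)"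
    using assms(1) unfolding in_span_on_def by blast
  have "(\<Sum>i<d'. (if i < d then \<beta> i else 0) * e' i t) = (\<Sum>i<d. \<beta> i * e i t)" for t
    by (rule sum.mono_neutral_cong_right) (use assms(2,3) in auto)
  then show ?thesis
    using \<beta> unfolding in_span_on_def by (intro exI[of _ "\<lambda>i. if i < d then \<beta> i else 0"]) simp
qed

lemma in_span_on_sum:
  assumes "finite J" "\<And>j. j \<in> J \<Longrightarrow> in_span_on a b d e (\<phi> j)"
  shows "in_span_on a b d e (\<lambda>t. \<Sum>j\<in>J. c j * \<phi> j t)"
proof -
  have "\<forall>j\<in>J. \<exists>\<beta>. \<forall>t\<in>{a..b}. \<phi> j t = (\<Sum>i<d. \<beta> i * e i t)"
    using assms(2) unfolding in_span_on_def by blast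
  then obtain \<beta> where \<beta>: "\<forall>j\<in>J. \<forall>t\<in>{a..b}. \<phi> j t = (\<Sum>i<d. \<beta> j i * e i t)"
    by (metis bchoice)
  have "(\<Sum>j\<in>J. c j * \<phi> j t) = (\<Sum>i<d. (\<Sum>j\<in>J. c j * \<beta> j i) * e i t)" if "t \<in> {a..b}" for t
  proof -
    have "(\<Sum>j\<in>J. c j * \<phi> j t) = (\<Sum>j\<in>J. \<Sum>i<d. c j * \<beta> j i * e i t)"
      using \<beta> that by (simp add: sum_distrib_left mult.assoc)
    also have "\<dots> = (\<Sum>i<d. (\<Sum>j\<in>J. c j * \<beta> j i) * e i t)"
      by (subst sum.swap) (simp add: sum_distrib_right)
    finally show ?thesis .
  qed
  then show ?thesis
    unfolding in_span_on_def by (intro exI[of _ "\<lambda>i. \<Sum>j\<in>J. c j * \<beta> j i"]) blast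
qed

lemma orthonormal_on_residual_orthogonal:
  assumes "orthonormal_on a b d e" "continuous_on {a..b} \<phi>" "j < d"
  shows "L2_inner a b (\<lambda>t. \<phi> t - (\<Sum>i<d. L2_inner a b \<phi> (e i) * e i t)) (e j) = 0"
proof -
  have ce: "\<forall>i<d. continuous_on {a..b} (e i)"
    using assms(1) by (simp add: orthonormal_on_def)
  have "L2_inner a b (\<lambda>t. \<Sum>i<d. L2_inner a b \<phi> (e i) * e i t) (e j) = L2_inner a b \<phi> (e j)"
    by (rule orthonormal_on_coefficients[OF assms(1) _ assms(3)]) simp
  then show ?thesis
    using ce assms(3) by (subst L2_inner_diff_left) (auto intro!: continuous_intros assms(2))
qed

lemma orthonormal_on_extend:
  assumes "orthonormal_on a b d e" "continuous_on {a..b} r" "\<And>j. j < d \<Longrightarrow> L2_inner a b r (e j) = 0"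
    and pos: "integral {a..b} (\<lambda>t. (cmod (r t))\<^sup>2) > 0"
  shows "orthonormal_on a b (Suc d)
    (e(d := (\<lambda>t. r t / of_real (sqrt (integral {a..b} (\<lambda>t. (cmod (r t))\<^sup>2))))))"
proof -
  define N where "N = integral {a..b} (\<lambda>t. (cmod (r t))\<^sup>2)"
  define \<psi> where "\<psi> t = r t / of_real (sqrt N)" for t
  have c\<psi>: "continuous_on {a..b} \<psi>"
    unfolding \<psi>_def N_def using pos by (intro continuous_intros assms(2)) auto
  have \<psi>_orth: "L2_inner a b \<psi> (e j) = 0" if "j < d" for j
    using assms(3)[OF that] by (simp add: L2_inner_def \<psi>_def)
  have "L2_inner a b \<psi> \<psi> = of_real (integral {a..b} (\<lambda>t. (cmod (r t))\<^sup>2 / N))"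
    using pos by (simp add: L2_inner_self[OF c\<psi>] \<psi>_def N_def norm_divide power_divide)
  also have "\<dots> = 1"
    using pos by (simp add: N_def)
  finally have "L2_inner a b \<psi> \<psi> = 1" .
  then show ?thesis
    using assms(1) c\<psi> \<psi>_orth L2_inner_cnj[of a b "e _" \<psi>]
    by (auto simp: orthonormal_on_def less_Suc_eq N_def \<psi>_def[abs_def])
qed

lemma gram_schmidt_step:
  assumes "a < b" "orthonormal_on a b d e" "continuous_on {a..b} \<phi>"
  obtains d' e' where "d \<le> d'" "d' \<le> Suc d" "orthonormal_on a b d' e'" "\<forall>i<d. e' i = e i"
    "in_span_on a b d' e' \<phi>"
proof -
  define \<alpha> where "\<alpha> i = L2_inner a b \<phi> (e i)" for i
  define r where "r t = \<phi> t - (\<Sum>i<d. \<alpha> i * e i t)" for t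
  define N where "N = integral {a..b} (\<lambda>t. (cmod (r t))\<^sup>2)"
  have cr: "continuous_on {a..b} r"
    using assms(2) unfolding r_def orthonormal_on_def by (intro continuous_intros assms(3)) auto
  have r_orth: "L2_inner a b r (e j) = 0" if "j < d" for j
    unfolding r_def \<alpha>_def by (rule orthonormal_on_residual_orthogonal[OF assms(2,3) that])
  have "N \<ge> 0"
    unfolding N_def by (rule integral_cmod_sq_nonneg)
  then consider "N = 0" | "N > 0"
    by linarith
  then show ?thesis
  proof cases
    case 1
    then have "r t = 0" if "t \<in> {a..b}" for t
      using integral_cmod_sq_eq_0D[OF assms(1) cr _ that] by (simp add: N_def)
    then have "in_span_on a b d e \<phi>"
      unfolding in_span_on_def r_def by (intro exI[of _ \<alpha>]) simp
    then show ?thesis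
      using that[of d e] assms(2) by simp
  next
    case 2
    define e' where "e' = e(d := (\<lambda>t. r t / of_real (sqrt N)))"
    have "orthonormal_on a b (Suc d) e'"
      unfolding e'_def N_def using orthonormal_on_extend[OF assms(2) cr r_orth] 2 by (simp add: N_def)
    moreover have "\<phi> t = (\<Sum>i<Suc d. (if i < d then \<alpha> i else of_real (sqrt N)) * e' i t)" for t
      using 2 by (simp add: e'_def r_def)
    then have "in_span_on a b (Suc d) e' \<phi>"
      unfolding in_span_on_def by (intro exI[of _ "\<lambda>i. if i < d then \<alpha> i else of_real (sqrt N)"]) blast
    ultimately show ?thesis
      using that[of "Suc d" e'] by (simp add: e'_def)
  qed
qed

lemma gram_schmidt:
  assumes "a < b" "finite J" "\<And>j. j \<in> J \<Longrightarrow> continuous_on {a..b} (\<phi> j)"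
  obtains d e where "d \<le> card J" "orthonormal_on a b d e" "\<And>j. j \<in> J \<Longrightarrow> in_span_on a b d e (\<phi> j)"
  using assms(2,3)
proof (induction J arbitrary: thesis rule: finite_induct)
  case empty
  show ?case
    by (rule empty(1)[of 0 "\<lambda>_ _. 0"]) (auto simp: orthonormal_on_def)
next
  case (insert x F)
  obtain d e where d: "d \<le> card F" and e: "orthonormal_on a b d e"
    and F: "\<And>j. j \<in> F \<Longrightarrow> in_span_on a b d e (\<phi> j)"
    using insert.IH insert.prems(2) by blast
  obtain d' e' where "d \<le> d'" "d' \<le> Suc d" "orthonormal_on a b d' e'" "\<forall>i<d. e' i = e i"
    "in_span_on a b d' e' (\<phi> x)"
    using gram_schmidt_step[OF assms(1) e insert.prems(2)] by blast
  moreover have "in_span_on a b d' e' (\<phi> j)" if "j \<in> F" for j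
    using in_span_on_extend[OF F[OF that]] \<open>d \<le> d'\<close> \<open>\<forall>i<d. e' i = e i\<close> by blast
  ultimately show ?case
    using insert.prems(1)[of d' e'] insert.hyps d by auto
qed

lemma orthonormal_on_in_span_point_bound:
  assumes "orthonormal_on a b d e" "in_span_on a b d e g" "u \<in> {a..b}"
  shows "(cmod (g u))\<^sup>2 \<le> integral {a..b} (\<lambda>t. (cmod (g t))\<^sup>2) * (\<Sum>i<d. (cmod (e i u))\<^sup>2)"
proof -
  obtain \<beta> where \<beta>: "\<forall>t\<in>{a..b}. g t = (\<Sum>i<d. \<beta> i * e i t)"
    using assms(2) unfolding in_span_on_def by blast
  define G where "G t = (\<Sum>i<d. \<beta> i * e i t)" for t
  have ce: "\<forall>i<d. continuous_on {a..b} (e i)"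
    using assms(1) by (simp add: orthonormal_on_def)
  have cG: "continuous_on {a..b} G"
    unfolding G_def using ce by (intro continuous_intros) auto
  have "integral {a..b} (\<lambda>t. (cmod (g t))\<^sup>2) = integral {a..b} (\<lambda>t. (cmod (G t))\<^sup>2)"
    using \<beta> by (intro integral_cong) (simp add: G_def)
  then have "complex_of_real (integral {a..b} (\<lambda>t. (cmod (g t))\<^sup>2)) = L2_inner a b G G"
    by (simp add: L2_inner_self[OF cG])
  also have "\<dots> = (\<Sum>i<d. \<beta> i * L2_inner a b (e i) G)"
    unfolding G_def using ce cG by (intro L2_inner_sum_left) (auto simp: G_def)
  also have "\<dots> = (\<Sum>i<d. of_real ((cmod (\<beta> i))\<^sup>2))"
    using orthonormal_on_coefficients[OF assms(1), of G \<beta>]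
    by (intro sum.cong refl) (simp add: L2_inner_cnj[of a b "e _" G] G_def flip: complex_norm_square)
  finally have parseval: "integral {a..b} (\<lambda>t. (cmod (g t))\<^sup>2) = (\<Sum>i<d. (cmod (\<beta> i))\<^sup>2)"
    by (metis of_real_eq_iff of_real_sum)
  have "cmod (g u) \<le> (\<Sum>i<d. cmod (\<beta> i) * cmod (e i u))"
    using \<beta> assms(3) norm_sum[of "\<lambda>i. \<beta> i * e i u" "{..<d}"] by (simp add: norm_mult)
  then have "(cmod (g u))\<^sup>2 \<le> (\<Sum>i<d. cmod (\<beta> i) * cmod (e i u))\<^sup>2"
    by (simp add: power_mono)
  also have "\<dots> \<le> (\<Sum>i<d. (cmod (\<beta> i))\<^sup>2) * (\<Sum>i<d. (cmod (e i u))\<^sup>2)"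
    by (rule Cauchy_Schwarz_ineq_sum)
  finally show ?thesis
    by (simp only: parseval)
qed

lemma orthonormal_on_integral_kernel:
  assumes "orthonormal_on a b d e"
  shows "integral {a..b} (\<lambda>u. \<Sum>i<d. (cmod (e i u))\<^sup>2) = real d"
proof -
  have ce: "\<forall>i<d. continuous_on {a..b} (e i)" and ee: "\<forall>i<d. L2_inner a b (e i) (e i) = 1"
    using assms by (auto simp: orthonormal_on_def)
  have "integral {a..b} (\<lambda>u. \<Sum>i<d. (cmod (e i u))\<^sup>2) = (\<Sum>i<d. integral {a..b} (\<lambda>u. (cmod (e i u))\<^sup>2))"
    using ce by (intro integral_sum) (auto intro!: integrable_continuous_interval continuous_intros)
  also have "\<dots> = (\<Sum>i<d. 1)"
    using ce ee by (intro sum.cong refl) (simp add: L2_inner_self)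
  finally show ?thesis by simp
qed

section \<open>The upper bound\<close>

lemma span_eval_average_bound:
  fixes \<phi> :: "'j \<Rightarrow> real \<Rightarrow> complex" and g :: "real \<Rightarrow> real \<Rightarrow> complex"
  assumes "a < b" "finite J" "\<And>j. j \<in> J \<Longrightarrow> continuous_on {a..b} (\<phi> j)"
    and span: "\<And>u. u \<in> {a..b} \<Longrightarrow> \<exists>c. \<forall>t\<in>{a..b}. g u t = (\<Sum>j\<in>J. c j * \<phi> j t)"
    and eval: "\<And>u. u \<in> {a..b} \<Longrightarrow> A \<le> (cmod (g u u))\<^sup>2"
    and norm: "\<And>u. u \<in> {a..b} \<Longrightarrow> integral {a..b} (\<lambda>t. (cmod (g u t))\<^sup>2) \<le> M"
  shows "A * (b - a) \<le> real (card J) * M"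
proof -
  obtain d e where d: "d \<le> card J" and e: "orthonormal_on a b d e"
    and \<phi>: "\<And>j. j \<in> J \<Longrightarrow> in_span_on a b d e (\<phi> j)"
    using gram_schmidt[of a b J \<phi>] assms(1-3) by blast
  define K where "K u = (\<Sum>i<d. (cmod (e i u))\<^sup>2)" for u
  have cK: "continuous_on {a..b} K"
    using e unfolding K_def orthonormal_on_def by (intro continuous_intros) auto
  have K: "K u \<ge> 0" for u
    unfolding K_def by (intro sum_nonneg) auto
  have M: "M \<ge> 0"
    using norm[of a] assms(1) integral_cmod_sq_nonneg[of "{a..b}" "g a"] by simp
  have pointwise: "A \<le> M * K u" if u: "u \<in> {a..b}" for u
  proof -
    obtain c where c: "\<forall>t\<in>{a..b}. g u t = (\<Sum>j\<in>J. c j * \<phi> j t)"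
      using span[OF u] by blast
    have "in_span_on a b d e (\<lambda>t. \<Sum>j\<in>J. c j * \<phi> j t)"
      using in_span_on_sum[OF assms(2) \<phi>] .
    then have "in_span_on a b d e (g u)"
      using c unfolding in_span_on_def by simp
    then have "(cmod (g u u))\<^sup>2 \<le> integral {a..b} (\<lambda>t. (cmod (g u t))\<^sup>2) * K u"
      unfolding K_def by (rule orthonormal_on_in_span_point_bound[OF e _ u])
    also have "\<dots> \<le> M * K u"
      using norm[OF u] K by (rule mult_right_mono)
    finally show ?thesis
      using eval[OF u] by linarith
  qed
  have "A * (b - a) = integral {a..b} (\<lambda>u. A)"
    using assms(1) by simp
  also have "\<dots> \<le> integral {a..b} (\<lambda>u. M * K u)"
    using pointwise cK by (intro integral_le integrable_continuous_interval continuous_intros) auto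
  also have "\<dots> = M * real d"
    using orthonormal_on_integral_kernel[OF e] by (simp add: K_def)
  also have "\<dots> \<le> real (card J) * M"
    using d M by (simp add: mult.commute mult_left_mono)
  finally show ?thesis .
qed

lemma continuous_on_exp_sums: "f \<in> exp_sums n \<Longrightarrow> continuous_on S f"
  unfolding exp_sums_def by (auto intro!: continuous_intros)

lemma exp_sums_local_bound:
  assumes "f \<in> exp_sums n" "\<delta> > 0"
  shows "(cmod (f y))\<^sup>2 * \<delta> \<le> real n * integral {y - \<delta>..y + \<delta>} (\<lambda>t. (cmod (f t))\<^sup>2)"
proof -
  obtain c \<omega> where f: "f = (\<lambda>t. \<Sum>j\<in>{1..n}. c j * exp (\<omega> j * complex_of_real t))"
    using assms(1) unfolding exp_sums_def by blast
  have "(cmod (f y))\<^sup>2 * (\<delta> - 0) \<le> real (card {1..n}) * integral {y - \<delta>..y + \<delta>} (\<lambda>t. (cmod (f t))\<^sup>2)"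
  proof (rule span_eval_average_bound[where g = "\<lambda>u t. f (y - u + t)"])
    show "\<exists>c'. \<forall>t\<in>{0..\<delta>}. f (y - u + t) = (\<Sum>j\<in>{1..n}. c' j * exp (\<omega> j * complex_of_real t))" for u
      by (rule exI[of _ "\<lambda>j. c j * exp (\<omega> j * complex_of_real (y - u))"])
        (simp add: f distrib_left exp_add mult.assoc)
    show "integral {0..\<delta>} (\<lambda>t. (cmod (f (y - u + t)))\<^sup>2) \<le> integral {y - \<delta>..y + \<delta>} (\<lambda>t. (cmod (f t))\<^sup>2)"
      if "u \<in> {0..\<delta>}" for u
    proof -
      have "integral {0..\<delta>} (\<lambda>t. (cmod (f (y - u + t)))\<^sup>2) = integral {y - u..y - u + \<delta>} (\<lambda>t. (cmod (f t))\<^sup>2)"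
        using integral_shift_Icc_real[of 0 \<delta> "\<lambda>t. (cmod (f t))\<^sup>2" "y - u"] by (simp add: o_def add.commute)
      also have "\<dots> \<le> integral {y - \<delta>..y + \<delta>} (\<lambda>t. (cmod (f t))\<^sup>2)"
        using that continuous_on_exp_sums[OF assms(1)]
        by (intro integral_subset_le integrable_continuous_interval continuous_intros) auto
      finally show ?thesis .
    qed
  qed (use assms(2) in \<open>auto intro!: continuous_on_exp continuous_on_mult_left continuous_on_of_real_id\<close>)
  then show ?thesis by simp
qed

lemma exp_sums_le_L2_norm_on:
  assumes "f \<in> exp_sums n" "\<delta> > 0" "a \<le> y - \<delta>" "y + \<delta> \<le> b"
  shows "cmod (f y) \<le> sqrt (real n / \<delta>) * L2_norm_on a b f"
proof -
  define I where "I = integral {a..b} (\<lambda>t. (cmod (f t))\<^sup>2)"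
  have "(cmod (f y))\<^sup>2 * \<delta> \<le> real n * integral {y - \<delta>..y + \<delta>} (\<lambda>t. (cmod (f t))\<^sup>2)"
    by (rule exp_sums_local_bound[OF assms(1,2)])
  also have "\<dots> \<le> real n * I"
    unfolding I_def using assms continuous_on_exp_sums[OF assms(1)]
    by (intro mult_left_mono integral_subset_le integrable_continuous_interval continuous_intros) auto
  finally have "(cmod (f y))\<^sup>2 * \<delta> \<le> real n * I" .
  then have "(cmod (f y))\<^sup>2 \<le> real n / \<delta> * I"
    using assms(2) by (simp add: field_simps)
  then have "cmod (f y) \<le> sqrt (real n / \<delta> * I)"
    using real_le_rsqrt by blast
  then show ?thesis
    by (simp add: L2_norm_on_def I_def flip: real_sqrt_mult)
qed

section \<open>A peaked exponential sum\<close>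

lemma integral_exp_period:
  fixes T p :: real and z :: int
  assumes "T > 0"
  shows "integral {p..p + T} (\<lambda>s. exp (\<i> * of_real (2 * pi * of_int z * s / T)))
       = (if z = 0 then of_real T else 0)"
proof (cases "z = 0")
  case True
  then show ?thesis
    using assms by (simp add: scaleR_conv_of_real)
next
  case False
  define w where "w = \<i> * of_real (2 * pi * of_int z / T)"
  have w: "w \<noteq> 0"
    using False assms by (simp add: w_def)
  have "((\<lambda>s. exp (w * of_real s)) has_integral (exp (w * of_real (p + T)) / w - exp (w * of_real p) / w))
      {p..p + T}"
    using assms w
    by (intro fundamental_theorem_of_calculus)
      (auto intro!: derivative_eq_intros has_vector_derivative_real_field)
  moreover have "exp (w * of_real (p + T)) = exp (w * of_real p)"
  proof -
    have "w * of_real (p + T) = w * of_real p + (2 * of_int z * pi) * \<i>"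
      using assms by (simp add: w_def field_simps)
    then show ?thesis
      using exp_integer_2pi[of "of_int z"] by (simp add: exp_add)
  qed
  ultimately have "integral {p..p + T} (\<lambda>s. exp (w * of_real s)) = 0"
    by (simp add: integral_unique)
  moreover have "\<i> * of_real (2 * pi * of_int z * s / T) = w * of_real s" for s
    by (simp add: w_def)
  ultimately show ?thesis
    using False by simp
qed

lemma complex_norm_sum_square:
  "complex_of_real ((cmod (\<Sum>k\<in>K. z k))\<^sup>2) = (\<Sum>k\<in>K. \<Sum>l\<in>K. z k * cnj (z l))"
  unfolding complex_norm_square cnj_sum sum_product ..

lemma integral_trig_poly_sq:
  fixes c :: "nat \<Rightarrow> complex" and T p :: real
  assumes "finite K" "T > 0"
  shows "integral {p..p + T} (\<lambda>s. (cmod (\<Sum>k\<in>K. c k * exp (\<i> * of_real (2 * pi * real k * s / T))))\<^sup>2)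
       = T * (\<Sum>k\<in>K. (cmod (c k))\<^sup>2)"
proof -
  define e where "e k s = exp (\<i> * of_real (2 * pi * real k * s / T))" for k s
  have T: "complex_of_real T \<noteq> 0"
    using assms(2) by simp
  have prod: "e k s * cnj (e l s) = exp (\<i> * of_real (2 * pi * of_int (int k - int l) * s / T))" for k l s
    by (simp add: e_def exp_cnj algebra_simps diff_divide_distrib flip: exp_add exp_diff)
  have sq: "of_real ((cmod (\<Sum>k\<in>K. c k * e k s))\<^sup>2)
      = (\<Sum>k\<in>K. \<Sum>l\<in>K. c k * cnj (c l) * exp (\<i> * of_real (2 * pi * of_int (int k - int l) * s / T)))" for s
    unfolding complex_norm_sum_square prod[symmetric] by (simp add: mult_ac)
  have "(\<lambda>s. (cmod (\<Sum>k\<in>K. c k * e k s))\<^sup>2) integrable_on {p..p + T}"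
    unfolding e_def using T by (intro integrable_continuous_interval continuous_intros) auto
  then have "complex_of_real (integral {p..p + T} (\<lambda>s. (cmod (\<Sum>k\<in>K. c k * e k s))\<^sup>2))
      = integral {p..p + T} (\<lambda>s. of_real ((cmod (\<Sum>k\<in>K. c k * e k s))\<^sup>2))"
    by (rule integral_unique[OF has_integral_of_real[OF integrable_integral], symmetric])
  also have "\<dots> = (\<Sum>k\<in>K. \<Sum>l\<in>K. c k * cnj (c l) *
        integral {p..p + T} (\<lambda>s. exp (\<i> * of_real (2 * pi * of_int (int k - int l) * s / T))))"
    unfolding sq using assms
    by (simp add: T integral_sum integrable_continuous_interval continuous_intros)
  also have "\<dots> = (\<Sum>k\<in>K. \<Sum>l\<in>K. if k = l then c k * cnj (c l) * of_real T else 0)"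
    by (intro sum.cong refl, subst integral_exp_period[OF assms(2)]) simp
  also have "\<dots> = (\<Sum>k\<in>K. c k * cnj (c k) * of_real T)"
    using assms(1) by (simp add: sum.delta')
  also have "\<dots> = of_real (T * (\<Sum>k\<in>K. (cmod (c k))\<^sup>2))"
    unfolding of_real_mult of_real_sum complex_norm_square sum_distrib_left by (simp add: mult_ac)
  finally show ?thesis
    unfolding e_def by (simp only: of_real_eq_iff)
qed

lemma integral_le_geometric_periods:
  fixes h :: "real \<Rightarrow> real"
  assumes "T > 0" "p \<le> a" "continuous_on UNIV h" "\<And>t. p \<le> t \<Longrightarrow> 0 \<le> h t"
    and period: "\<And>m. integral {p + real m * T..p + real m * T + T} h \<le> C / 2 ^ m"
  shows "integral {a..b} h \<le> 2 * C"
proof -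
  have int: "h integrable_on {u..v}" for u v
    by (intro integrable_continuous_interval continuous_on_subset[OF assms(3)]) auto
  have partial: "integral {p..p + real N * T} h \<le> 2 * C * (1 - 1 / 2 ^ N)" for N
  proof (induction N)
    case 0
    then show ?case by simp
  next
    case (Suc N)
    have "integral {p..p + real (Suc N) * T} h = integral {p..p + real N * T + T} h"
      by (simp add: algebra_simps)
    also have "\<dots> = integral {p..p + real N * T} h + integral {p + real N * T..p + real N * T + T} h"
      by (rule Henstock_Kurzweil_Integration.integral_combine[symmetric]) (use assms(1) int in auto)
    also have "\<dots> \<le> 2 * C * (1 - 1 / 2 ^ N) + C / 2 ^ N"
      using Suc.IH period[of N] by linarith
    finally show ?case
      by (simp add: field_simps)
  qed
  obtain N :: nat where N: "(b - p) / T \<le> real N"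
    using real_arch_simple by blast
  have "integral {a..b} h \<le> integral {p..p + real N * T} h"
    using N assms(1,2,4) by (intro integral_subset_le int) (auto simp: field_simps)
  also have "\<dots> \<le> 2 * C * (1 - 1 / 2 ^ N)"
    by (rule partial)
  also have "\<dots> \<le> 2 * C"
  proof -
    have "0 \<le> integral {p..p + T} h"
      by (rule integral_nonneg[OF int]) (use assms(4) in auto)
    then show ?thesis
      using period[of 0] by (simp add: mult_left_le)
  qed
  finally show ?thesis .
qed

lemma exp_damping_sq_le:
  assumes "\<delta> > 0" "y - \<delta> + real m * (2 * \<delta>) \<le> t"
  shows "(exp (- (ln 2 / (4 * \<delta>)) * (t - y)))\<^sup>2 \<le> 2 / 2 ^ m"
proof -
  define L where "L = ln 2 / (4 * \<delta>)"
  have "(2 * \<delta> * real m - \<delta>) * (2 * L) \<le> (t - y) * (2 * L)"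
    using assms by (intro mult_right_mono) (auto simp: L_def algebra_simps)
  moreover have "(2 * \<delta> * real m - \<delta>) * (2 * L) = real m * ln 2 - ln 2 / 2"
    using assms(1) by (simp add: L_def field_simps)
  moreover have "- 2 * L * (t - y) = - ((t - y) * (2 * L))"
    by (simp add: algebra_simps)
  moreover have "0 < ln (2::real)"
    by simp
  ultimately have "- 2 * L * (t - y) \<le> ln 2 - real m * ln 2"
    by linarith
  have "(exp (- L * (t - y)))\<^sup>2 = exp (- 2 * L * (t - y))"
    by (simp add: exp_of_nat_mult[symmetric] algebra_simps)
  also have "\<dots> \<le> exp (ln 2 - real m * ln 2)"
    using \<open>- 2 * L * (t - y) \<le> ln 2 - real m * ln 2\<close> by simp
  also have "\<dots> = 2 / 2 ^ m"
    by (simp add: exp_diff exp_of_nat_mult)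
  finally show ?thesis
    unfolding L_def .
qed

definition peak_exp_sum :: "real \<Rightarrow> real \<Rightarrow> nat \<Rightarrow> real \<Rightarrow> complex" where
  "peak_exp_sum \<delta> y n t = (\<Sum>k\<in>{1..n}.
     exp ((- of_real (ln 2 / (4 * \<delta>)) + \<i> * of_real (2 * pi * real k / (2 * \<delta>))) * of_real (t - y)))"

lemma peak_exp_sum_in_exp_sums: "peak_exp_sum \<delta> y n \<in> exp_sums n"
proof -
  define \<omega> where "\<omega> k = - of_real (ln 2 / (4 * \<delta>)) + \<i> * of_real (2 * pi * real k / (2 * \<delta>))" for k :: nat
  have "exp (\<omega> k * of_real (t - y)) = exp (- \<omega> k * of_real y) * exp (\<omega> k * of_real t)" for k t
  proof -
    have "exp (\<omega> k * of_real (t - y)) = exp (- \<omega> k * of_real y + \<omega> k * of_real t)"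
      by (rule arg_cong[where f = exp]) (simp add: algebra_simps)
    then show ?thesis
      by (simp only: exp_add)
  qed
  then have eq: "peak_exp_sum \<delta> y n = (\<lambda>t. \<Sum>k\<in>{1..n}. exp (- \<omega> k * of_real y) * exp (\<omega> k * of_real t))"
    unfolding peak_exp_sum_def \<omega>_def[symmetric] by simp
  show ?thesis
    unfolding exp_sums_def mem_Collect_eq
    by (rule exI[where x = "\<lambda>k. exp (- \<omega> k * of_real y)"], rule exI[where x = \<omega>]) (rule eq)
qed

lemma peak_exp_sum_center: "peak_exp_sum \<delta> y n y = of_nat n"
  by (simp add: peak_exp_sum_def)

lemma peak_exp_sum_factor:
  "peak_exp_sum \<delta> y n t = of_real (exp (- (ln 2 / (4 * \<delta>)) * (t - y))) *
     (\<Sum>k\<in>{1..n}. exp (\<i> * of_real (- (2 * pi * real k * y / (2 * \<delta>))))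
        * exp (\<i> * of_real (2 * pi * real k * t / (2 * \<delta>))))"
proof -
  have "exp ((- of_real (ln 2 / (4 * \<delta>)) + \<i> * of_real (2 * pi * real k / (2 * \<delta>))) * of_real (t - y))
      = exp (of_real (- (ln 2 / (4 * \<delta>)) * (t - y))
          + (\<i> * of_real (- (2 * pi * real k * y / (2 * \<delta>))) + \<i> * of_real (2 * pi * real k * t / (2 * \<delta>))))"
    for k
    by (rule arg_cong[where f = exp]) (simp add: algebra_simps diff_divide_distrib)
  then show ?thesis
    by (simp only: peak_exp_sum_def exp_add exp_of_real sum_distrib_left)
qed

lemma peak_exp_sum_period_integral:
  assumes "\<delta> > 0"
  shows "integral {y - \<delta> + real m * (2 * \<delta>)..y - \<delta> + real m * (2 * \<delta>) + 2 * \<delta>}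
      (\<lambda>t. (cmod (peak_exp_sum \<delta> y n t))\<^sup>2) \<le> 4 * \<delta> * real n / 2 ^ m"
proof -
  define p where "p = y - \<delta> + real m * (2 * \<delta>)"
  define c where "c k = exp (\<i> * of_real (- (2 * pi * real k * y / (2 * \<delta>))))" for k :: nat
  define D where "D t = (\<Sum>k\<in>{1..n}. c k * exp (\<i> * of_real (2 * pi * real k * t / (2 * \<delta>))))" for t
  have cD: "continuous_on {p..p + 2 * \<delta>} D"
    unfolding D_def using assms by (intro continuous_intros) auto
  have "integral {p..p + 2 * \<delta>} (\<lambda>t. (cmod (peak_exp_sum \<delta> y n t))\<^sup>2)
      \<le> integral {p..p + 2 * \<delta>} (\<lambda>t. 2 / 2 ^ m * (cmod (D t))\<^sup>2)"
  proof (rule integral_le)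
    show "(\<lambda>t. (cmod (peak_exp_sum \<delta> y n t))\<^sup>2) integrable_on {p..p + 2 * \<delta>}"
      using continuous_on_exp_sums[OF peak_exp_sum_in_exp_sums]
      by (intro integrable_continuous_interval continuous_intros)
    show "(\<lambda>t. 2 / 2 ^ m * (cmod (D t))\<^sup>2) integrable_on {p..p + 2 * \<delta>}"
      by (intro integrable_continuous_interval continuous_intros cD)
    show "(cmod (peak_exp_sum \<delta> y n t))\<^sup>2 \<le> 2 / 2 ^ m * (cmod (D t))\<^sup>2" if "t \<in> {p..p + 2 * \<delta>}" for t
      unfolding peak_exp_sum_factor norm_mult power_mult_distrib D_def[symmetric, unfolded c_def]
      using exp_damping_sq_le[OF assms, of y m t] that by (intro mult_right_mono) (auto simp: p_def)
  qed
  also have "\<dots> = 2 / 2 ^ m * (2 * \<delta> * real n)"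
    using assms integral_trig_poly_sq[where K = "{1..n}" and T = "2 * \<delta>" and c = c and p = p]
    by (simp add: D_def c_def norm_exp_i_times)
  finally show ?thesis
    by (simp add: p_def)
qed

lemma peak_exp_sum_integral_le:
  assumes "\<delta> > 0" "y - \<delta> \<le> a"
  shows "integral {a..b} (\<lambda>t. (cmod (peak_exp_sum \<delta> y n t))\<^sup>2) \<le> 8 * \<delta> * real n"
proof -
  have "integral {a..b} (\<lambda>t. (cmod (peak_exp_sum \<delta> y n t))\<^sup>2) \<le> 2 * (4 * \<delta> * real n)"
    using continuous_on_exp_sums[OF peak_exp_sum_in_exp_sums]
    by (intro integral_le_geometric_periods[OF _ assms(2) _ _ peak_exp_sum_period_integral[OF assms(1)]])
      (use assms(1) in \<open>auto intro!: continuous_intros\<close>)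
  then show ?thesis
    by simp
qed

lemma exp_sums_reflect:
  assumes "f \<in> exp_sums n"
  shows "(\<lambda>t. f (- t)) \<in> exp_sums n"
proof -
  obtain c \<omega> where "f = (\<lambda>t. \<Sum>j\<in>{1..n}. c j * exp (\<omega> j * of_real t))"
    using assms unfolding exp_sums_def by blast
  then show ?thesis
    unfolding exp_sums_def by (intro CollectI exI[of _ c] exI[of _ "\<lambda>j. - \<omega> j"]) simp
qed

lemma exp_sums_peak:
  assumes "\<delta> > 0" "y - \<delta> \<le> a \<or> b \<le> y + \<delta>"
  shows "\<exists>f\<in>exp_sums n. f y = of_nat n \<and> integral {a..b} (\<lambda>t. (cmod (f t))\<^sup>2) \<le> 8 * \<delta> * real n"
  using assms(2)
proof
  assume "y - \<delta> \<le> a"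
  then show ?thesis
    using peak_exp_sum_in_exp_sums peak_exp_sum_center peak_exp_sum_integral_le[OF assms(1)] by blast
next
  assume "b \<le> y + \<delta>"
  define g where "g = peak_exp_sum \<delta> (- y) n"
  have g: "g \<in> exp_sums n" "g (- y) = of_nat n"
    "integral {- b..- a} (\<lambda>t. (cmod (g t))\<^sup>2) \<le> 8 * \<delta> * real n"
    using peak_exp_sum_in_exp_sums peak_exp_sum_center peak_exp_sum_integral_le[OF assms(1)] \<open>b \<le> y + \<delta>\<close>
    by (auto simp: g_def)
  moreover have "integral {a..b} (\<lambda>t. (cmod (g (- t)))\<^sup>2) = integral {- b..- a} (\<lambda>t. (cmod (g t))\<^sup>2)"
    using Henstock_Kurzweil_Integration.integral_reflect_real[of "- a" "- b" "\<lambda>t. (cmod (g t))\<^sup>2"] by simp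
  ultimately show ?thesis
    using exp_sums_reflect[OF g(1)] by (intro bexI[of _ "\<lambda>t. g (- t)"]) auto
qed

lemma L2_norm_on_nonneg: "L2_norm_on a b f \<ge> 0"
  unfolding L2_norm_on_def using integral_cmod_sq_nonneg by simp

lemma exp_sums_ratio_le:
  assumes "f \<in> exp_sums n" "a < y" "y < b"
  shows "cmod (f y) / L2_norm_on a b f \<le> sqrt (real n / min (y - a) (b - y))"
proof -
  have "cmod (f y) \<le> sqrt (real n / min (y - a) (b - y)) * L2_norm_on a b f"
    using assms by (intro exp_sums_le_L2_norm_on) auto
  moreover have "min (y - a) (b - y) > 0"
    using assms(2,3) by simp
  ultimately show ?thesis
    using L2_norm_on_nonneg[of a b f]
    by (cases "L2_norm_on a b f = 0") (simp_all add: divide_le_eq)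
qed

lemma exp_sums_ratio_ge:
  assumes "a < y" "y < b" "n > 0"
  obtains f where "f \<in> exp_sums n" "f \<noteq> (\<lambda>_. 0)"
    "sqrt (real n / (8 * min (y - a) (b - y))) \<le> cmod (f y) / L2_norm_on a b f"
proof -
  define \<delta> where "\<delta> = min (y - a) (b - y)"
  have \<delta>: "\<delta> > 0"
    using assms by (simp add: \<delta>_def)
  have "y - \<delta> \<le> a \<or> b \<le> y + \<delta>"
    by (auto simp: \<delta>_def min_def)
  then obtain f where f: "f \<in> exp_sums n" "f y = of_nat n"
    and I: "integral {a..b} (\<lambda>t. (cmod (f t))\<^sup>2) \<le> 8 * \<delta> * real n"
    using exp_sums_peak[OF \<delta>] by blast
  have fy: "f y \<noteq> 0"
    using f(2) assms(3) by simp
  have "integral {a..b} (\<lambda>t. (cmod (f t))\<^sup>2) \<noteq> 0"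
    using integral_cmod_sq_eq_0D[of a b f y] continuous_on_exp_sums[OF f(1)] fy assms(1,2) by auto
  then have pos: "L2_norm_on a b f > 0"
    using L2_norm_on_nonneg[of a b f] by (auto simp: L2_norm_on_def)
  have "sqrt (real n / (8 * \<delta>)) * L2_norm_on a b f \<le> sqrt (real n / (8 * \<delta>)) * sqrt (8 * \<delta> * real n)"
    using I \<delta> by (intro mult_left_mono real_sqrt_le_mono) (auto simp: L2_norm_on_def)
  also have "\<dots> = real n"
    using \<delta> by (simp add: field_simps flip: real_sqrt_mult)
  finally have "sqrt (real n / (8 * \<delta>)) \<le> cmod (f y) / L2_norm_on a b f"
    using pos f(2) by (simp add: pos_le_divide_eq)
  moreover have "f \<noteq> (\<lambda>_. 0)"
    using fy by auto
  ultimately show ?thesis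
    using that f(1) unfolding \<delta>_def by blast
qed

theorem theorem7p1:
  fixes a b y :: real and n :: nat
  assumes "a < b" and "a < y" and "y < b" and "n \<ge> 2"
  shows "ereal (sqrt ((real n - 2) * ln 2 / (32 * min (y - a) (b - y))))
           \<le> (SUP f\<in>{f \<in> exp_sums n. f \<noteq> (\<lambda>_. 0)}. ereal (cmod (f y) / L2_norm_on a b f))
         \<and> (SUP f\<in>{f \<in> exp_sums n. f \<noteq> (\<lambda>_. 0)}. ereal (cmod (f y) / L2_norm_on a b f))
           \<le> ereal (sqrt (2 * real n / min (y - a) (b - y)))"
proof
  define \<delta> where "\<delta> = min (y - a) (b - y)"
  have \<delta>: "\<delta> > 0"
    using assms by (simp add: \<delta>_def)
  obtain f where f: "f \<in> exp_sums n" "f \<noteq> (\<lambda>_. 0)"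
    and ratio: "sqrt (real n / (8 * \<delta>)) \<le> cmod (f y) / L2_norm_on a b f"
    using exp_sums_ratio_ge[OF assms(2,3)] assms(4) unfolding \<delta>_def by (metis not_numeral_le_zero not_gr0)
  have "(real n - 2) * ln 2 \<le> 4 * real n"
    using assms(4) ln_le_minus_one[of 2] mult_left_mono[of "ln 2" 1 "real n - 2"] by simp
  from divide_right_mono[OF this, of "32 * \<delta>"]
  have "sqrt ((real n - 2) * ln 2 / (32 * \<delta>)) \<le> sqrt (real n / (8 * \<delta>))"
    using \<delta> by simp
  then have "ereal (sqrt ((real n - 2) * ln 2 / (32 * \<delta>))) \<le> ereal (cmod (f y) / L2_norm_on a b f)"
    using order_trans[OF _ ratio] by simp
  also have "\<dots> \<le> (SUP f\<in>{f \<in> exp_sums n. f \<noteq> (\<lambda>_. 0)}. ereal (cmod (f y) / L2_norm_on a b f))"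
    using f by (intro SUP_upper) auto
  finally show "ereal (sqrt ((real n - 2) * ln 2 / (32 * min (y - a) (b - y))))
      \<le> (SUP f\<in>{f \<in> exp_sums n. f \<noteq> (\<lambda>_. 0)}. ereal (cmod (f y) / L2_norm_on a b f))"
    unfolding \<delta>_def .
  have "sqrt (real n / \<delta>) \<le> sqrt (2 * real n / \<delta>)"
    using \<delta> by (simp add: divide_right_mono)
  then show "(SUP f\<in>{f \<in> exp_sums n. f \<noteq> (\<lambda>_. 0)}. ereal (cmod (f y) / L2_norm_on a b f))
      \<le> ereal (sqrt (2 * real n / min (y - a) (b - y)))"
    using exp_sums_ratio_le[OF _ assms(2,3)] unfolding \<delta>_def by (intro SUP_least) (force intro: order_trans)
qed

end
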